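(* Let $\alpha\in(0,\pi/2)$ and let $\mathbf X=(X_0,\dots,X_n)$ be a good input whose requests span the interval $[-1,r]$ of the $x$-axis, $0\le r\le 1$. Then the cost of the optimal offline algorithm is $$\mathrm{OPT}(\mathbf X;\alpha)=\begin{cases}\frac12\sqrt{(1+r)^2\cot^2\alpha+(1-r)^2} & \text{if } \alpha\le\pi/4 \text{ or } r\ge\frac{\tan^2\alpha-1}{1+\tan^2\alpha},\\ \cos\alpha & \text{otherwise.}\end{cases}$$
   Context: A drone with half angle-of-view $\alpha\in(0,\pi/2)$ at a point $(t_x,t_y)$, $t_y\ge0$, covers $[t_x-t_y\tan\alpha,t_x+t_y\tan\alpha]$ on the $x$-axis. An input is a sequence $X_0=(0,0),X_1,\dots,X_n$ ($n\ge1$) of points on the $x$-axis, $X_i=(x_i,0)$. A solution is a sequence of positions $P_0=(0,0),P_1,\dots,P_n$ in the closed upper half-plane such that $P_i$ covers $X_0,\dots,X_i$; its cost is $\sum_i|P_iP_{i+1}|$. $\mathrm{OPT}(\mathbf X;\alpha)$ is the minimum cost of a solution (input known in advance). A request $X_{i+1}$ is redundant if $x_{i+1}\in[\min_{j\le i}x_j,\max_{j\le i}x_j]$. An input is good if it has no redundant requests, $\min_j x_j=-1$ and $\max_j x_j\in[0,1]$. *)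

theory Defs
  imports Complex_Main
begin

text \<open>A drone at position (tx, ty) with half angle-of-view alpha covers the
  point (x, 0) of the x-axis iff x lies in [tx - ty tan alpha, tx + ty tan alpha].\<close>
definition covers :: "real \<Rightarrow> real \<times> real \<Rightarrow> real \<Rightarrow> bool" where
  "covers \<alpha> P x \<longleftrightarrow> fst P - snd P * tan \<alpha> \<le> x \<and> x \<le> fst P + snd P * tan \<alpha>"

definition pdist :: "real \<times> real \<Rightarrow> real \<times> real \<Rightarrow> real" where
  "pdist P Q = sqrt ((fst P - fst Q)^2 + (snd P - snd Q)^2)"

text \<open>Input: requests X_i = (x i, 0), i = 0..n, with x 0 = 0.
  A solution is a sequence of positions P_0 = (0,0), P_1, ..., P_n in the closed
  upper half-plane such that P_i covers X_0, ..., X_i.\<close>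
definition is_solution :: "real \<Rightarrow> nat \<Rightarrow> (nat \<Rightarrow> real) \<Rightarrow> (nat \<Rightarrow> real \<times> real) \<Rightarrow> bool" where
  "is_solution \<alpha> n x P \<longleftrightarrow> P 0 = (0, 0) \<and>
     (\<forall>i\<le>n. snd (P i) \<ge> 0 \<and> (\<forall>j\<le>i. covers \<alpha> (P i) (x j)))"

definition cost :: "nat \<Rightarrow> (nat \<Rightarrow> real \<times> real) \<Rightarrow> real" where
  "cost n P = (\<Sum>i<n. pdist (P i) (P (Suc i)))"

definition OPT :: "real \<Rightarrow> nat \<Rightarrow> (nat \<Rightarrow> real) \<Rightarrow> real" where
  "OPT \<alpha> n x = Inf {cost n P | P. is_solution \<alpha> n x P}"

definition redundant :: "(nat \<Rightarrow> real) \<Rightarrow> nat \<Rightarrow> bool" where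
  "redundant x i \<longleftrightarrow> Min (x ` {..i}) \<le> x (Suc i) \<and> x (Suc i) \<le> Max (x ` {..i})"

definition good_input :: "nat \<Rightarrow> (nat \<Rightarrow> real) \<Rightarrow> bool" where
  "good_input n x \<longleftrightarrow> 1 \<le> n \<and> x 0 = 0 \<and> (\<forall>i<n. \<not> redundant x i) \<and>
     Min (x ` {..n}) = -1 \<and> 0 \<le> Max (x ` {..n}) \<and> Max (x ` {..n}) \<le> 1"

end

theory Submission
  imports Defs "HOL-Analysis.Euclidean_Space"
begin

text \<open>With \<open>t = tan \<alpha>\<close>, a position \<open>(a, b)\<close> covers all requests exactly when it lies in the cone
  \<open>a - b t \<le> -1 \<and> r \<le> a + b t\<close>, and every solution ends there. Since the cost of a solution is at
  least the distance from the origin to its final position, \<open>OPT\<close> is the distance from the origin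
  to this cone, attained by flying straight to its nearest point and staying there. That point is
  the foot of the perpendicular onto the left boundary line \<open>a - b t = -1\<close> if this foot lies in the
  cone, which happens iff \<open>r < (t\<^sup>2 - 1) / (1 + t\<^sup>2)\<close>, and the apex of the cone otherwise.
  In both cases minimality is certified by \<open>\<langle>q, q\<rangle> \<le> \<langle>q, p\<rangle>\<close> for all \<open>p\<close> in the cone.\<close>

lemma norm_le_norm_if_inner_le:
  fixes p q :: "'a::real_inner"
  assumes "inner q q \<le> inner q p"
  shows "norm q \<le> norm p"
proof (cases "q = 0")
  case False
  have "norm q * norm q \<le> norm q * norm p"
    using assms norm_cauchy_schwarz[of q p] by (simp add: power2_norm_eq_inner[symmetric] power2_eq_square)
  then show ?thesis
    using False by simp
qed simp

lemma pdist_eq_dist: "pdist P Q = dist P Q"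
  by (simp add: pdist_def dist_prod_def dist_real_def)

lemma dist_le_cost: "dist (P 0) (P m) \<le> cost m P"
proof (induction m)
  case 0
  then show ?case
    by (simp add: cost_def)
next
  case (Suc m)
  have "dist (P 0) (P (Suc m)) \<le> dist (P 0) (P m) + dist (P m) (P (Suc m))"
    by (rule dist_triangle)
  also have "\<dots> \<le> cost (Suc m) P"
    using Suc by (simp add: cost_def pdist_eq_dist)
  finally show ?case .
qed

lemma covers_all_iff:
  assumes "lo \<in> S" "hi \<in> S" "S \<subseteq> {lo..hi}"
  shows "(\<forall>y\<in>S. covers \<alpha> P y) \<longleftrightarrow> fst P - snd P * tan \<alpha> \<le> lo \<and> hi \<le> fst P + snd P * tan \<alpha>"
  using assms unfolding covers_def by fastforce

lemma OPT_eq_norm_nearest_cover: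
  assumes "1 \<le> n" "x 0 = 0"
    and Q: "0 \<le> snd Q" "\<forall>j\<le>n. covers \<alpha> Q (x j)"
    and nearest: "\<And>P. 0 \<le> snd P \<Longrightarrow> \<forall>j\<le>n. covers \<alpha> P (x j) \<Longrightarrow> norm Q \<le> norm P"
  shows "OPT \<alpha> n x = norm Q"
  unfolding OPT_def
proof (rule cInf_eq_minimum)
  define P where "P i = (if i = 0 then 0 else Q)" for i :: nat
  have "is_solution \<alpha> n x P"
    using assms(2) Q by (auto simp: is_solution_def P_def covers_def zero_prod_def)
  moreover have "cost n P = norm Q"
  proof -
    have "cost n P = (\<Sum>i<n. if i = 0 then norm Q else 0)"
      unfolding cost_def pdist_eq_dist by (intro sum.cong) (auto simp: P_def dist_norm)
    also have "\<dots> = norm Q"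
      using assms(1) by (simp add: sum.delta')
    finally show ?thesis .
  qed
  ultimately show "norm Q \<in> {cost n P | P. is_solution \<alpha> n x P}"
    by (auto intro!: exI[of _ P])
next
  fix c assume "c \<in> {cost n P | P. is_solution \<alpha> n x P}"
  then obtain P where c: "c = cost n P" and sol: "is_solution \<alpha> n x P"
    by auto
  have "norm Q \<le> norm (P n)"
    using sol by (intro nearest) (auto simp: is_solution_def)
  also have "\<dots> = dist (P 0) (P n)"
    using sol by (simp add: is_solution_def flip: zero_prod_def)
  also have "\<dots> \<le> c"
    unfolding c by (rule dist_le_cost)
  finally show "norm Q \<le> c" .
qed

text \<open>The apex is the intersection of the boundary lines \<open>a - b t = -1\<close> and \<open>a + b t = r\<close>; the foot
  is the orthogonal projection of the origin onto the first of them.\<close>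

definition cone_apex :: "real \<Rightarrow> real \<Rightarrow> real \<times> real" where
  "cone_apex t r = ((r - 1) / 2, (1 + r) / (2 * t))"

definition cone_foot :: "real \<Rightarrow> real \<times> real" where
  "cone_foot t = (- 1 / (1 + t^2), t / (1 + t^2))"

definition cone_nearest :: "real \<Rightarrow> real \<Rightarrow> real \<times> real" where
  "cone_nearest t r = (if (t^2 - 1) / (1 + t^2) \<le> r then cone_apex t r else cone_foot t)"

lemma cone_nearest_in_cone:
  fixes t r :: real
  assumes "0 < t" "-1 \<le> r"
  defines "Q \<equiv> cone_nearest t r"
  shows "0 \<le> snd Q" "fst Q - snd Q * t \<le> -1" "r \<le> fst Q + snd Q * t"
proof -
  have "0 \<le> snd Q \<and> fst Q - snd Q * t \<le> -1 \<and> r \<le> fst Q + snd Q * t"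
  proof (cases "(t^2 - 1) / (1 + t^2) \<le> r")
    case True
    then show ?thesis
      using assms by (simp add: Q_def cone_nearest_def cone_apex_def field_simps)
  next
    case False
    have "- 1 / (1 + t^2) + t / (1 + t^2) * t = (t^2 - 1) / (1 + t^2)"
      by (simp add: diff_divide_distrib power2_eq_square)
    moreover have "- 1 / (1 + t^2) - t / (1 + t^2) * t = -1"
      using add_pos_nonneg[of 1 "t^2"] by (simp add: field_simps power2_eq_square)
    ultimately show ?thesis
      using False assms by (simp add: Q_def cone_nearest_def cone_foot_def)
  qed
  then show "0 \<le> snd Q" "fst Q - snd Q * t \<le> -1" "r \<le> fst Q + snd Q * t"
    by auto
qed

lemma norm_cone_foot_le:
  fixes t a b :: real
  assumes "a - b * t \<le> -1"
  shows "norm (cone_foot t) \<le> norm (a, b)"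
proof (rule norm_le_norm_if_inner_le)
  have pos: "0 < 1 + t^2"
    by (simp add: add_pos_nonneg)
  have "inner (cone_foot t) (cone_foot t) = 1 / (1 + t^2)"
    using pos by (simp add: cone_foot_def power_divide power2_eq_square add_divide_distrib[symmetric])
  also have "\<dots> \<le> (b * t - a) / (1 + t^2)"
    using pos assms by (simp add: divide_right_mono)
  also have "\<dots> = inner (cone_foot t) (a, b)"
    by (simp add: cone_foot_def diff_divide_distrib)
  finally show "inner (cone_foot t) (cone_foot t) \<le> inner (cone_foot t) (a, b)" .
qed

lemma norm_cone_apex_le:
  fixes t r a b :: real
  assumes "0 < t" "-1 \<le> r" "r \<le> 1" "(t^2 - 1) / (1 + t^2) \<le> r"
    and "a - b * t \<le> -1" "r \<le> a + b * t"
  shows "norm (cone_apex t r) \<le> norm (a, b)"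
proof (rule norm_le_norm_if_inner_le)
  \<comment> \<open>Lagrange multipliers: the apex is a nonnegative combination of the inner normals
    \<open>(-1, t)\<close> and \<open>(1, t)\<close> of the two boundary lines.\<close>
  define \<mu> \<nu> where "\<mu> = ((1 + r) / t^2 - (r - 1)) / 4" and "\<nu> = ((1 + r) / t^2 + (r - 1)) / 4"
  have "0 \<le> (1 + r) / t^2"
    using assms(2) by simp
  then have "0 \<le> \<mu>"
    using assms(3) by (simp add: \<mu>_def)
  have "t^2 - 1 \<le> r * (1 + t^2)"
    using assms(4) by (simp add: pos_divide_le_eq add_pos_nonneg)
  then have "0 \<le> \<nu>"
    using assms(1) by (simp add: \<nu>_def field_simps)
  have apex: "cone_apex t r = (\<nu> - \<mu>, (\<mu> + \<nu>) * t)"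
    using assms(1) by (simp add: cone_apex_def \<mu>_def \<nu>_def field_simps power2_eq_square)
  have "inner (cone_apex t r) (cone_apex t r) = \<mu> + \<nu> * r"
    using assms(1) by (simp add: apex \<mu>_def \<nu>_def field_simps power2_eq_square)
  also have "\<dots> \<le> \<mu> * (b * t - a) + \<nu> * (a + b * t)"
    using \<open>0 \<le> \<mu>\<close> \<open>0 \<le> \<nu>\<close> assms(5,6)
      mult_left_mono[of 1 "b * t - a" \<mu>] mult_left_mono[of r "a + b * t" \<nu>] by simp
  also have "\<dots> = inner (cone_apex t r) (a, b)"
    by (simp add: apex algebra_simps)
  finally show "inner (cone_apex t r) (cone_apex t r) \<le> inner (cone_apex t r) (a, b)" .
qed

lemma norm_cone_nearest_le:
  fixes t r a b :: real
  assumes "0 < t" "-1 \<le> r" "r \<le> 1" "a - b * t \<le> -1" "r \<le> a + b * t"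
  shows "norm (cone_nearest t r) \<le> norm (a, b)"
proof (cases "(t^2 - 1) / (1 + t^2) \<le> r")
  case True
  then show ?thesis
    using norm_cone_apex_le[OF assms(1-3) True assms(4,5)] by (simp add: cone_nearest_def)
next
  case False
  then show ?thesis
    using norm_cone_foot_le[OF assms(4)] by (simp add: cone_nearest_def)
qed

lemma norm_cone_apex_tan:
  fixes \<alpha> r :: real
  shows "norm (cone_apex (tan \<alpha>) r) = sqrt ((1 + r)^2 * (cot \<alpha>)^2 + (1 - r)^2) / 2"
proof -
  have "(1 + r) / (2 * tan \<alpha>) = (1 + r) * cot \<alpha> / 2"
    unfolding cot_altdef by (simp add: field_simps)
  then have apex: "cone_apex (tan \<alpha>) r = ((r - 1) / 2, (1 + r) * cot \<alpha> / 2)"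
    by (simp only: cone_apex_def)
  have "norm (cone_apex (tan \<alpha>) r) = sqrt (((r - 1) / 2)^2 + ((1 + r) * cot \<alpha> / 2)^2)"
    unfolding apex norm_Pair real_norm_def power2_abs ..
  also have "((r - 1) / 2)^2 + ((1 + r) * cot \<alpha> / 2)^2 = ((1 + r)^2 * (cot \<alpha>)^2 + (1 - r)^2) / 4"
    by (simp add: power2_eq_square field_simps)
  also have "sqrt (((1 + r)^2 * (cot \<alpha>)^2 + (1 - r)^2) / 4) = sqrt ((1 + r)^2 * (cot \<alpha>)^2 + (1 - r)^2) / 2"
    by (simp add: real_sqrt_divide)
  finally show ?thesis .
qed

lemma norm_cone_foot_tan:
  fixes \<alpha> :: real
  assumes "0 < cos \<alpha>"
  shows "norm (cone_foot (tan \<alpha>)) = cos \<alpha>"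
proof -
  have "1 / (1 + (tan \<alpha>)^2) = (cos \<alpha>)^2"
    using assms by (simp add: tan_sec divide_inverse power_inverse)
  then have foot: "cone_foot (tan \<alpha>) = (- ((cos \<alpha>)^2), sin \<alpha> * cos \<alpha>)"
    using assms by (simp add: cone_foot_def tan_def power2_eq_square divide_inverse)
  have "norm (cone_foot (tan \<alpha>)) = sqrt ((- ((cos \<alpha>)^2))^2 + (sin \<alpha> * cos \<alpha>)^2)"
    unfolding foot norm_Pair real_norm_def power2_abs ..
  also have "(- ((cos \<alpha>)^2))^2 + (sin \<alpha> * cos \<alpha>)^2 = (cos \<alpha>)^2 * ((sin \<alpha>)^2 + (cos \<alpha>)^2)"
    by algebra
  also have "sqrt ((cos \<alpha>)^2 * ((sin \<alpha>)^2 + (cos \<alpha>)^2)) = cos \<alpha>"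
    using assms by simp
  finally show ?thesis .
qed

lemma norm_cone_nearest_tan:
  fixes \<alpha> r :: real
  assumes "0 < \<alpha>" "\<alpha> < pi / 2" "0 \<le> r"
  shows "norm (cone_nearest (tan \<alpha>) r) =
    (if \<alpha> \<le> pi / 4 \<or> r \<ge> ((tan \<alpha>)^2 - 1) / (1 + (tan \<alpha>)^2)
     then sqrt ((1 + r)^2 * (cot \<alpha>)^2 + (1 - r)^2) / 2
     else cos \<alpha>)"
proof -
  have "((tan \<alpha>)^2 - 1) / (1 + (tan \<alpha>)^2) \<le> r" if "\<alpha> \<le> pi / 4"
  proof -
    have "tan \<alpha> \<le> 1"
      using that assms(1) tan_mono_le_eq[of \<alpha> "pi / 4"] by (simp add: tan_45)
    then have "(tan \<alpha>)^2 \<le> 1"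
      using tan_gt_zero[OF assms(1,2)] by (simp add: power_le_one)
    then show ?thesis
      using assms(3) by (simp add: divide_nonpos_pos add_pos_nonneg order.trans[OF _ assms(3)])
  qed
  moreover have "0 < cos \<alpha>"
    using assms(1,2) by (simp add: cos_gt_zero_pi)
  ultimately show ?thesis
    by (auto simp: cone_nearest_def norm_cone_apex_tan norm_cone_foot_tan)
qed

theorem lemma2:
  fixes \<alpha> r :: real and n :: nat and x :: "nat \<Rightarrow> real"
  assumes "0 < \<alpha>" and "\<alpha> < pi / 2"
    and "good_input n x"
    and "Max (x ` {..n}) = r"
  shows "OPT \<alpha> n x =
    (if \<alpha> \<le> pi / 4 \<or> r \<ge> ((tan \<alpha>)^2 - 1) / (1 + (tan \<alpha>)^2)
     then sqrt ((1 + r)^2 * (cot \<alpha>)^2 + (1 - r)^2) / 2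
     else cos \<alpha>)"
proof -
  have "0 < tan \<alpha>"
    using assms(1,2) by (rule tan_gt_zero)
  have input: "1 \<le> n" "x 0 = 0" "Min (x ` {..n}) = -1" "0 \<le> r" "r \<le> 1"
    using assms(3,4) by (auto simp: good_input_def)
  have requests: "-1 \<in> x ` {..n}" "r \<in> x ` {..n}" "x ` {..n} \<subseteq> {-1..r}"
    using Min_in[of "x ` {..n}"] Max_in[of "x ` {..n}"] Min_le[of "x ` {..n}"] Max_ge[of "x ` {..n}"]
    by (auto simp: input(3) assms(4))
  have covers_iff: "(\<forall>j\<le>n. covers \<alpha> P (x j)) \<longleftrightarrow>
      fst P - snd P * tan \<alpha> \<le> -1 \<and> r \<le> fst P + snd P * tan \<alpha>" for P
    using covers_all_iff[OF requests, of \<alpha> P] by auto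
  have "OPT \<alpha> n x = norm (cone_nearest (tan \<alpha>) r)"
    using input cone_nearest_in_cone[OF \<open>0 < tan \<alpha>\<close>, of r]
      norm_cone_nearest_le[OF \<open>0 < tan \<alpha>\<close>, of r]
    by (intro OPT_eq_norm_nearest_cover) (auto simp: covers_iff)
  then show ?thesis
    using norm_cone_nearest_tan[OF assms(1,2) input(4)] by simp
qed

end
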